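(* For every integer $n\geq 4$, let $S_n$ be the star with $n$ vertices (one center adjacent to $n-1$ leaves). Then $\chi_L(S_n\odot\overline{K_1})=\lceil\sqrt{n}\rceil+1$.
   Context: All graphs are finite and simple. A $k$-coloring of a connected graph $G$ is a map $c:V(G)\to\{1,\dots,k\}$ with $c(u)\neq c(v)$ for adjacent $u,v$; it induces the partition $\Pi=\{C_1,\dots,C_k\}$ into color classes $C_i=c^{-1}(i)$. The color code of $v$ is $c_\Pi(v)=(d(v,C_1),\dots,d(v,C_k))$ with $d(v,C_i)=\min\{d(v,x): x\in C_i\}$ (graph distance). $c$ is a locating coloring if distinct vertices have distinct color codes; the locating-chromatic number $\chi_L(G)$ is the least $k$ for which a locating $k$-coloring exists. The corona product $G\odot H$ of a graph $G$ with vertex set $\{a_1,\dots,a_n\}$ and a graph $H$ is obtained from one copy of $G$ and $n$ disjoint copies of $H$ by joining $a_i$ to every vertex of the $i$-th copy of $H$. Thus $S_n\odot\overline{K_1}$ is the tree obtained from $S_n$ by attaching one new pendant vertex to each of its $n$ vertices. *)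

theory Defs
  imports Complex_Main
begin

text \<open>A (simple) graph is a vertex set together with a symmetric, irreflexive
adjacency relation (on that vertex set).\<close>
type_synonym 'a graph = "'a set \<times> ('a \<Rightarrow> 'a \<Rightarrow> bool)"

definition verts :: "'a graph \<Rightarrow> 'a set" where "verts G = fst G"
definition adj :: "'a graph \<Rightarrow> 'a \<Rightarrow> 'a \<Rightarrow> bool" where "adj G = snd G"

definition is_walk :: "'a graph \<Rightarrow> 'a list \<Rightarrow> bool" where
  "is_walk G xs \<longleftrightarrow> xs \<noteq> [] \<and> set xs \<subseteq> verts G \<and>
     (\<forall>i. Suc i < length xs \<longrightarrow> adj G (xs ! i) (xs ! Suc i))"

definition gdist :: "'a graph \<Rightarrow> 'a \<Rightarrow> 'a \<Rightarrow> nat" where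
  "gdist G u v = (LEAST k. \<exists>xs. is_walk G xs \<and> hd xs = u \<and> last xs = v \<and> length xs = Suc k)"

definition setdist :: "'a graph \<Rightarrow> 'a \<Rightarrow> 'a set \<Rightarrow> nat" where
  "setdist G v C = Min (gdist G v ` C)"

definition is_coloring :: "'a graph \<Rightarrow> nat \<Rightarrow> ('a \<Rightarrow> nat) \<Rightarrow> bool" where
  "is_coloring G k c \<longleftrightarrow> c ` verts G = {1..k} \<and>
     (\<forall>u\<in>verts G. \<forall>v\<in>verts G. adj G u v \<longrightarrow> c u \<noteq> c v)"

definition color_class :: "'a graph \<Rightarrow> ('a \<Rightarrow> nat) \<Rightarrow> nat \<Rightarrow> 'a set" where
  "color_class G c i = {x \<in> verts G. c x = i}"

definition color_code :: "'a graph \<Rightarrow> nat \<Rightarrow> ('a \<Rightarrow> nat) \<Rightarrow> 'a \<Rightarrow> nat list" where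
  "color_code G k c v = map (\<lambda>i. setdist G v (color_class G c i)) [1..<Suc k]"

definition locating_coloring :: "'a graph \<Rightarrow> nat \<Rightarrow> ('a \<Rightarrow> nat) \<Rightarrow> bool" where
  "locating_coloring G k c \<longleftrightarrow> is_coloring G k c \<and> inj_on (color_code G k c) (verts G)"

definition locating_chromatic_number :: "'a graph \<Rightarrow> nat" where
  "locating_chromatic_number G = (LEAST k. \<exists>c. locating_coloring G k c)"

text \<open>Corona product G \<odot> H: a copy of G plus, for each vertex a of G, a copy of H
(vertices (a,h)) all of whose vertices are joined to a.\<close>
definition corona :: "'a graph \<Rightarrow> 'b graph \<Rightarrow> ('a + ('a \<times> 'b)) graph" where
  "corona G H =
    (Inl ` verts G \<union> {Inr (a, h) | a h. a \<in> verts G \<and> h \<in> verts H},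
     (\<lambda>x y. case (x, y) of
        (Inl a, Inl b) \<Rightarrow> adj G a b
      | (Inr (a, h), Inr (b, h')) \<Rightarrow> a = b \<and> a \<in> verts G \<and> adj H h h'
      | (Inl a, Inr (b, h)) \<Rightarrow> a = b \<and> a \<in> verts G \<and> h \<in> verts H
      | (Inr (b, h), Inl a) \<Rightarrow> a = b \<and> a \<in> verts G \<and> h \<in> verts H))"

definition star :: "nat \<Rightarrow> nat graph" where
  "star n = ({0..<n}, (\<lambda>u v. u < n \<and> v < n \<and> ((u = 0 \<and> v \<noteq> 0) \<or> (v = 0 \<and> u \<noteq> 0))))"

definition compl_K1 :: "unit graph" where
  "compl_K1 = ({()}, (\<lambda>_ _. False))"

end

theory Submission
  imports Defs
begin

text \<open>The centre of the corona has \<open>n\<close> neighbours, each with exactly one further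
  neighbour (for the pendant vertex of the centre this is the centre itself), so the graph
  consists of \<open>n\<close> spokes. In a locating colouring no two spokes carry the same pair of colours:
  otherwise the map exchanging them is a colour-preserving endomorphism, and since
  endomorphisms do not increase distances, the two inner vertices get the same colour code.
  The first colour of a pair avoids the colour of the centre and the second differs from the
  first, so \<open>n \<le> (k - 1)\<^sup>2\<close>. Conversely, for \<open>m = \<lceil>\<surd>n\<rceil>\<close> the spokes can be given distinct
  such pairs from \<open>m + 1\<close> colours, and then the own colour together with the colours of the
  closed neighbourhood, both of which are read off the colour code, separate all vertices.\<close>

lemma is_walk_iff_successively:
  "is_walk G xs \<longleftrightarrow> xs \<noteq> [] \<and> set xs \<subseteq> verts G \<and> successively (adj G) xs"
  by (simp add: is_walk_def successively_conv_nth)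

definition connected :: "'a graph \<Rightarrow> bool" where
  "connected G \<longleftrightarrow> (\<forall>u\<in>verts G. \<forall>w\<in>verts G. \<exists>xs. is_walk G xs \<and> hd xs = u \<and> last xs = w)"

lemma connectedI_from_root:
  assumes sym: "\<And>x y. adj G x y \<Longrightarrow> adj G y x"
    and root: "\<And>v. v \<in> verts G \<Longrightarrow> \<exists>xs. is_walk G xs \<and> hd xs = z \<and> last xs = v"
  shows "connected G"
  unfolding connected_def
proof (intro ballI)
  fix u w assume "u \<in> verts G" "w \<in> verts G"
  then obtain xs ys where xs: "is_walk G xs" "hd xs = z" "last xs = u"
    and ys: "is_walk G ys" "hd ys = z" "last ys = w"
    using root by meson
  have "is_walk G (rev xs @ tl ys)" "hd (rev xs @ tl ys) = u" "last (rev xs @ tl ys) = w"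
    using xs ys by (cases ys; cases "tl ys";
      auto simp: is_walk_iff_successively successively_append_iff hd_rev last_rev
      intro: successively_mono sym)+
  then show "\<exists>zs. is_walk G zs \<and> hd zs = u \<and> last zs = w" by blast
qed

definition closed_nbhd :: "'a graph \<Rightarrow> 'a \<Rightarrow> 'a set" where
  "closed_nbhd G u = {w \<in> verts G. w = u \<or> adj G u w}"

definition endomorphism :: "'a graph \<Rightarrow> ('a \<Rightarrow> 'a) \<Rightarrow> bool" where
  "endomorphism G h \<longleftrightarrow> h ` verts G \<subseteq> verts G \<and>
     (\<forall>x\<in>verts G. \<forall>y\<in>verts G. adj G x y \<longrightarrow> adj G (h x) (h y))"

lemma shortest_walk_exists:
  assumes "connected G" "u \<in> verts G" "w \<in> verts G"
  obtains xs where "is_walk G xs" "hd xs = u" "last xs = w" "length xs = Suc (gdist G u w)"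
proof -
  obtain xs where xs: "is_walk G xs" "hd xs = u" "last xs = w"
    using assms unfolding connected_def by blast
  then have "length xs = Suc (length xs - 1)" by (cases xs) (auto simp: is_walk_def)
  with xs have "\<exists>k xs. is_walk G xs \<and> hd xs = u \<and> last xs = w \<and> length xs = Suc k"
    by blast
  from LeastI_ex[OF this] show ?thesis using that unfolding gdist_def by blast
qed

lemma gdist_le_walk:
  assumes "is_walk G xs" "hd xs = u" "last xs = w" "length xs = Suc k"
  shows "gdist G u w \<le> k"
  unfolding gdist_def by (rule Least_le) (use assms in blast)

lemma gdist_self: "u \<in> verts G \<Longrightarrow> gdist G u u = 0"
  using gdist_le_walk[of G "[u]" u u 0] by (simp add: is_walk_def)

lemma gdist_adj_le_1: "u \<in> verts G \<Longrightarrow> w \<in> verts G \<Longrightarrow> adj G u w \<Longrightarrow> gdist G u w \<le> 1"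
  using gdist_le_walk[of G "[u,w]" u w 1] by (simp add: is_walk_iff_successively)

lemma gdist_le_1_imp:
  assumes "connected G" "u \<in> verts G" "w \<in> verts G" "gdist G u w \<le> 1"
  shows "u = w \<or> adj G u w"
proof -
  obtain xs where xs: "is_walk G xs" "hd xs = u" "last xs = w" "length xs = Suc (gdist G u w)"
    using shortest_walk_exists[OF assms(1-3)] .
  have "length xs \<le> 2" using xs(4) assms(4) by simp
  then consider a where "xs = [a]" | a b where "xs = [a, b]"
    using xs(1) by (cases xs; cases "tl xs") (auto simp: is_walk_def)
  then show ?thesis using xs by cases (auto simp: is_walk_iff_successively)
qed

lemma gdist_eq_0_imp:
  assumes "connected G" "u \<in> verts G" "w \<in> verts G" "gdist G u w = 0"
  shows "u = w"
proof -
  obtain xs where xs: "is_walk G xs" "hd xs = u" "last xs = w" "length xs = Suc (gdist G u w)"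
    using shortest_walk_exists[OF assms(1-3)] .
  with assms(4) obtain a where "xs = [a]" by (cases xs) auto
  with xs show ?thesis by simp
qed

lemma gdist_endomorphism_le:
  assumes "connected G" "endomorphism G h" "u \<in> verts G" "w \<in> verts G"
  shows "gdist G (h u) (h w) \<le> gdist G u w"
proof -
  obtain xs where xs: "is_walk G xs" "hd xs = u" "last xs = w" "length xs = Suc (gdist G u w)"
    using shortest_walk_exists[OF assms(1,3,4)] .
  then have "xs \<noteq> []" "set xs \<subseteq> verts G" "successively (adj G) xs"
    by (auto simp: is_walk_iff_successively)
  with assms(2) have "is_walk G (map h xs)"
    by (auto simp: is_walk_iff_successively endomorphism_def successively_map
        elim!: successively_mono)
  moreover have "hd (map h xs) = h u" "last (map h xs) = h w"
    using \<open>xs \<noteq> []\<close> xs by (auto simp: hd_map last_map)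
  ultimately show ?thesis using gdist_le_walk[of G "map h xs"] xs(4) by simp
qed

lemma setdist_attained:
  assumes "finite C" "C \<noteq> {}"
  obtains w where "w \<in> C" "setdist G u C = gdist G u w"
proof -
  have "setdist G u C \<in> gdist G u ` C" unfolding setdist_def using assms by (intro Min_in) auto
  then show ?thesis using that by auto
qed

lemma setdist_le_gdist: "finite C \<Longrightarrow> w \<in> C \<Longrightarrow> setdist G u C \<le> gdist G u w"
  unfolding setdist_def by (rule Min_le) auto

lemma setdist_eq_0_iff:
  assumes "connected G" "finite C" "C \<noteq> {}" "C \<subseteq> verts G" "u \<in> verts G"
  shows "setdist G u C = 0 \<longleftrightarrow> u \<in> C"
proof
  assume "setdist G u C = 0"
  then obtain w where "w \<in> C" "gdist G u w = 0" using setdist_attained[OF assms(2,3)] by metis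
  then show "u \<in> C" using gdist_eq_0_imp[OF assms(1,5)] assms(4) by auto
next
  assume "u \<in> C"
  then show "setdist G u C = 0"
    using setdist_le_gdist[OF assms(2), of u G u] gdist_self[OF assms(5)] by simp
qed

lemma setdist_le_1_iff:
  assumes "connected G" "finite C" "C \<noteq> {}" "C \<subseteq> verts G" "u \<in> verts G"
  shows "setdist G u C \<le> 1 \<longleftrightarrow> closed_nbhd G u \<inter> C \<noteq> {}"
proof
  assume "setdist G u C \<le> 1"
  then obtain w where "w \<in> C" "gdist G u w \<le> 1" using setdist_attained[OF assms(2,3)] by metis
  then show "closed_nbhd G u \<inter> C \<noteq> {}"
    using gdist_le_1_imp[OF assms(1,5)] assms(4) by (auto simp: closed_nbhd_def)
next
  assume "closed_nbhd G u \<inter> C \<noteq> {}"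
  then obtain w where w: "w \<in> C" "w = u \<or> adj G u w" by (auto simp: closed_nbhd_def)
  then have "gdist G u w \<le> 1" using gdist_self[OF assms(5)] gdist_adj_le_1[OF assms(5)] assms(4) by auto
  then show "setdist G u C \<le> 1" using setdist_le_gdist[OF assms(2) w(1), of G u] by simp
qed

lemma setdist_endomorphism_le:
  assumes "connected G" "endomorphism G h" "finite C" "C \<noteq> {}" "C \<subseteq> verts G"
    and "u \<in> verts G" "h ` C \<subseteq> C"
  shows "setdist G (h u) C \<le> setdist G u C"
proof -
  obtain w where w: "w \<in> C" "setdist G u C = gdist G u w" using setdist_attained[OF assms(3,4)] .
  have "setdist G (h u) C \<le> gdist G (h u) (h w)"
    using w(1) assms(7) by (intro setdist_le_gdist[OF assms(3)]) auto
  also have "\<dots> \<le> gdist G u w" using gdist_endomorphism_le[OF assms(1,2,6)] w(1) assms(5) by auto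
  finally show ?thesis using w(2) by simp
qed

lemma color_class_props:
  assumes "finite (verts G)" "is_coloring G k c" "t \<in> {1..k}"
  shows "finite (color_class G c t)" "color_class G c t \<noteq> {}" "color_class G c t \<subseteq> verts G"
proof -
  have "t \<in> c ` verts G" using assms(2,3) by (simp add: is_coloring_def)
  then show "finite (color_class G c t)" "color_class G c t \<noteq> {}" "color_class G c t \<subseteq> verts G"
    using assms(1) by (auto simp: color_class_def)
qed

text \<open>Distances do not increase along an endomorphism; applying it in both directions gives
  equality of all distances to the (invariant) colour classes.\<close>
lemma color_code_eq_if_swapped:
  assumes "connected G" "finite (verts G)" "is_coloring G k c"
    and "endomorphism G h" "\<forall>x\<in>verts G. c (h x) = c x"
    and "h u = v" "h v = u" "u \<in> verts G" "v \<in> verts G"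
  shows "color_code G k c u = color_code G k c v"
  unfolding color_code_def
proof (rule map_cong[OF refl])
  fix t assume "t \<in> set [1..<Suc k]"
  then have "t \<in> {1..k}" by auto
  note C = color_class_props[OF assms(2,3) this]
  have "h ` color_class G c t \<subseteq> color_class G c t"
    using assms(4,5) by (auto simp: color_class_def endomorphism_def)
  then show "setdist G u (color_class G c t) = setdist G v (color_class G c t)"
    using setdist_endomorphism_le[OF assms(1,4) C] assms(6-9) by (metis le_antisym)
qed

lemma colors_closed_nbhd_eq:
  assumes "connected G" "finite (verts G)" "is_coloring G k c" "u \<in> verts G"
  shows "c ` closed_nbhd G u = {t \<in> {1..k}. setdist G u (color_class G c t) \<le> 1}"
proof (intro set_eqI)
  fix t
  have meets: "t \<in> c ` closed_nbhd G u \<longleftrightarrow> closed_nbhd G u \<inter> color_class G c t \<noteq> {}"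
    by (auto simp: closed_nbhd_def color_class_def)
  show "t \<in> c ` closed_nbhd G u \<longleftrightarrow> t \<in> {t \<in> {1..k}. setdist G u (color_class G c t) \<le> 1}"
  proof (cases "t \<in> {1..k}")
    case True
    then show ?thesis
      using meets setdist_le_1_iff[OF assms(1) color_class_props[OF assms(2,3) True] assms(4)] by simp
  next
    case False
    then show ?thesis using assms(3) by (auto simp: is_coloring_def closed_nbhd_def)
  qed
qed

text \<open>The colour code determines the own colour (distance 0) and the set of colours
  in the closed neighbourhood (distance at most 1).\<close>
lemma locating_coloringI:
  assumes "connected G" "finite (verts G)" "is_coloring G k c"
    and "inj_on (\<lambda>u. (c u, c ` closed_nbhd G u)) (verts G)"
  shows "locating_coloring G k c"
  unfolding locating_coloring_def
proof (intro conjI assms(3) inj_onI)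
  fix u v assume u: "u \<in> verts G" and v: "v \<in> verts G"
    and code: "color_code G k c u = color_code G k c v"
  have eq: "setdist G u (color_class G c t) = setdist G v (color_class G c t)" if "t \<in> {1..k}" for t
  proof -
    have "t \<in> set [1..<Suc k]" using that by auto
    then show ?thesis using code unfolding color_code_def map_eq_conv by blast
  qed
  have "c u \<in> {1..k}" using assms(3) u by (auto simp: is_coloring_def)
  note C = color_class_props[OF assms(2,3) this]
  have "u \<in> color_class G c (c u)" using u by (simp add: color_class_def)
  then have "setdist G v (color_class G c (c u)) = 0"
    using eq[OF \<open>c u \<in> {1..k}\<close>] setdist_eq_0_iff[OF assms(1) C u] by simp
  then have "v \<in> color_class G c (c u)"
    using setdist_eq_0_iff[OF assms(1) C v] by simp
  then have "c u = c v" by (simp add: color_class_def)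
  moreover have "c ` closed_nbhd G u = c ` closed_nbhd G v"
    using eq by (auto simp: colors_closed_nbhd_eq[OF assms(1-3) u] colors_closed_nbhd_eq[OF assms(1-3) v])
  ultimately show "u = v" using inj_onD[OF assms(4) _ u v] by (simp only: prod.inject)
qed

abbreviation star_corona :: "nat \<Rightarrow> (nat + nat \<times> unit) graph" where
  "star_corona n \<equiv> corona (star n) compl_K1"

text \<open>The neighbours of the centre \<open>Inl 0\<close> are the vertices \<open>inner i\<close>, \<open>i < n\<close>,
  where \<open>inner 0\<close> is the pendant vertex of the centre; \<open>outer i\<close> is the other
  neighbour of \<open>inner i\<close>, so \<open>outer 0\<close> is the centre itself.\<close>
definition inner :: "nat \<Rightarrow> nat + nat \<times> unit" where
  "inner i = (if i = 0 then Inr (0, ()) else Inl i)"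

definition outer :: "nat \<Rightarrow> nat + nat \<times> unit" where
  "outer i = (if i = 0 then Inl 0 else Inr (i, ()))"

lemma inner_eq_iff [simp]: "inner i = inner j \<longleftrightarrow> i = j"
  and outer_eq_iff [simp]: "outer i = outer j \<longleftrightarrow> i = j"
  and inner_neq_outer [simp]: "inner i \<noteq> outer j" "outer j \<noteq> inner i"
  by (auto simp: inner_def outer_def)

lemma ex_less_nat_split: "(\<exists>i<n. P i) \<longleftrightarrow> (0 < (n::nat) \<and> P 0) \<or> (\<exists>i. 0 < i \<and> i < n \<and> P i)"
  by (metis gr0I)

lemma verts_star_corona: "verts (star_corona n) = inner ` {..<n} \<union> outer ` {..<n}"
  by (force simp: corona_def verts_def star_def compl_K1_def inner_def outer_def image_iff)

lemma adj_star_corona: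
  "adj (star_corona n) x y \<longleftrightarrow>
     (\<exists>i<n. x = inner i \<and> (y = outer 0 \<or> y = outer i) \<or> y = inner i \<and> (x = outer 0 \<or> x = outer i))"
proof -
  have "adj (star_corona n) x y \<longleftrightarrow>
     (\<exists>j. 0 < j \<and> j < n \<and> (x = Inl 0 \<and> y = Inl j \<or> x = Inl j \<and> y = Inl 0)) \<or>
     (\<exists>i<n. x = Inl i \<and> y = Inr (i, ()) \<or> x = Inr (i, ()) \<and> y = Inl i)"
    by (cases x; cases y) (auto simp: corona_def adj_def verts_def star_def compl_K1_def)
  also have "\<dots> \<longleftrightarrow>
     (\<exists>i<n. x = inner i \<and> (y = outer 0 \<or> y = outer i) \<or> y = inner i \<and> (x = outer 0 \<or> x = outer i))"
    unfolding ex_less_nat_split by (auto simp: inner_def outer_def)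
  finally show ?thesis .
qed

lemma adj_star_corona_sym: "adj (star_corona n) x y \<Longrightarrow> adj (star_corona n) y x"
  unfolding adj_star_corona by blast

lemma connected_star_corona: "connected (star_corona n)"
proof (rule connectedI_from_root[OF adj_star_corona_sym])
  fix v assume "v \<in> verts (star_corona n)"
  then obtain i where i: "i < n" "v = inner i \<or> v = outer i"
    unfolding verts_star_corona by blast
  have "is_walk (star_corona n) [outer 0, inner i, outer i]"
    using i(1) by (auto simp: is_walk_def verts_star_corona adj_star_corona nth_Cons split: nat.split)
  moreover have "is_walk (star_corona n) [outer 0, inner i]"
    using i(1) by (auto simp: is_walk_def verts_star_corona adj_star_corona nth_Cons split: nat.split)
  ultimately show "\<exists>xs. is_walk (star_corona n) xs \<and> hd xs = outer 0 \<and> last xs = v"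
    using i(2) by force
qed

text \<open>Exchanges the spokes \<open>(inner i, outer i)\<close> and \<open>(inner j, outer j)\<close>, except that
  the centre stays fixed: for \<open>j = 0\<close> it folds \<open>outer i\<close> onto the centre.\<close>
definition spoke_swap :: "nat \<Rightarrow> nat \<Rightarrow> nat + nat \<times> unit \<Rightarrow> nat + nat \<times> unit" where
  "spoke_swap i j x =
    (if x = inner i then inner j else if x = inner j then inner i
     else if x = outer i \<and> i \<noteq> 0 then outer j else if x = outer j \<and> j \<noteq> 0 then outer i else x)"

lemma endomorphism_spoke_swap:
  assumes "i < n" "j < n"
  shows "endomorphism (star_corona n) (spoke_swap i j)"
  using assms unfolding endomorphism_def verts_star_corona adj_star_corona spoke_swap_def
  by (auto 0 3)

lemma spoke_colors_inj:
  assumes lc: "locating_coloring (star_corona n) k c"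
  shows "inj_on (\<lambda>i. (c (inner i), c (outer i))) {..<n}"
proof (rule inj_onI, rule ccontr)
  fix i j assume ij: "i \<in> {..<n}" "j \<in> {..<n}" "i \<noteq> j"
    and eq: "(c (inner i), c (outer i)) = (c (inner j), c (outer j))"
  have V: "inner i \<in> verts (star_corona n)" "inner j \<in> verts (star_corona n)"
    using ij by (auto simp: verts_star_corona)
  have "\<forall>x\<in>verts (star_corona n). c (spoke_swap i j x) = c x"
    using eq by (auto simp: spoke_swap_def)
  then have "color_code (star_corona n) k c (inner i) = color_code (star_corona n) k c (inner j)"
    using lc ij V
    by (intro color_code_eq_if_swapped[OF connected_star_corona _ _ endomorphism_spoke_swap])
      (auto simp: locating_coloring_def verts_star_corona spoke_swap_def)
  then show False using lc V ij by (auto simp: locating_coloring_def dest: inj_onD)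
qed

lemma star_corona_size_le_if_locating:
  assumes "0 < n" and lc: "locating_coloring (star_corona n) k c"
  shows "n \<le> (k - 1) * (k - 1)"
proof -
  have col: "is_coloring (star_corona n) k c" using lc by (simp add: locating_coloring_def)
  have centre: "outer 0 \<in> verts (star_corona n)" using assms(1) by (auto simp: verts_star_corona)
  define P where "P = Sigma ({1..k} - {c (outer 0)}) (\<lambda>a. {1..k} - {a})"
  have "(\<lambda>i. (c (inner i), c (outer i))) ` {..<n} \<subseteq> P"
  proof clarify
    fix i assume "i < n"
    then have "adj (star_corona n) (inner i) (outer 0)" "adj (star_corona n) (inner i) (outer i)"
      "inner i \<in> verts (star_corona n)" "outer i \<in> verts (star_corona n)"
      by (auto simp: adj_star_corona verts_star_corona)
    then show "(c (inner i), c (outer i)) \<in> P"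
      using col centre unfolding P_def is_coloring_def by fastforce
  qed
  then have "n \<le> card P"
    using card_inj_on_le[OF spoke_colors_inj[OF lc]] by (simp add: P_def del: card_SigmaI)
  also have "card P = (k - 1) * (k - 1)"
  proof -
    have "c (outer 0) \<in> {1..k}" using col centre by (auto simp: is_coloring_def)
    then show ?thesis unfolding P_def by (simp add: card_SigmaI)
  qed
  finally show ?thesis .
qed

text \<open>For \<open>i < m * m\<close> the pairs \<open>(inner_color m i, outer_color m i)\<close> are distinct pairs
  \<open>(a, b)\<close> with \<open>2 \<le> a \<le> m + 1\<close>, \<open>1 \<le> b \<le> m + 1\<close> and \<open>a \<noteq> b\<close>: write
  \<open>i = q * m + r\<close>, take \<open>a = r + 2\<close>, and take for \<open>b\<close> the \<open>q\<close>-th element of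
  \<open>{1..m+1} - {a}\<close>.\<close>
definition inner_color :: "nat \<Rightarrow> nat \<Rightarrow> nat" where
  "inner_color m i = 2 + i mod m"

definition outer_color :: "nat \<Rightarrow> nat \<Rightarrow> nat" where
  "outer_color m i = (if i div m + 1 < inner_color m i then i div m + 1 else i div m + 2)"

definition spoke_coloring :: "nat \<Rightarrow> nat + nat \<times> unit \<Rightarrow> nat" where
  "spoke_coloring m x =
    (case x of Inl i \<Rightarrow> if i = 0 then 1 else inner_color m i
             | Inr (i, _) \<Rightarrow> if i = 0 then inner_color m 0 else outer_color m i)"

lemma inner_color_ge_2: "2 \<le> inner_color m i"
  by (simp add: inner_color_def)

lemma inner_color_neq_1: "inner_color m i \<noteq> 1"
  by (simp add: inner_color_def)

lemma inner_color_le: "0 < m \<Longrightarrow> inner_color m i \<le> m + 1"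
  using mod_less_divisor[of m i] by (simp add: inner_color_def Suc_le_eq)

lemma outer_color_ge_1: "1 \<le> outer_color m i"
  by (simp add: outer_color_def)

lemma outer_color_le: "i < m * m \<Longrightarrow> outer_color m i \<le> m + 1"
  using less_mult_imp_div_less[of i m m] by (simp add: outer_color_def)

lemma outer_color_neq_inner_color: "outer_color m i \<noteq> inner_color m i"
  by (simp add: outer_color_def)

lemma inner_color_0: "inner_color m 0 = 2"
  and outer_color_0: "outer_color m 0 = 1"
  by (simp_all add: inner_color_def outer_color_def)

lemma inner_outer_color_inj:
  assumes "inner_color m i = inner_color m j" "outer_color m i = outer_color m j"
  shows "i = j"
proof -
  have "i mod m = j mod m" using assms(1) by (simp add: inner_color_def)
  moreover have "i div m = j div m" using assms unfolding outer_color_def by (auto split: if_splits)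
  ultimately show ?thesis by (metis div_mult_mod_eq)
qed

lemma spoke_coloring_inner [simp]: "spoke_coloring m (inner i) = inner_color m i"
  and spoke_coloring_outer [simp]: "spoke_coloring m (outer i) = outer_color m i"
  by (simp_all add: spoke_coloring_def inner_def outer_def inner_color_0 outer_color_0)

lemma closed_nbhd_inner:
  "i < n \<Longrightarrow> closed_nbhd (star_corona n) (inner i) = {inner i, outer 0, outer i}"
  by (auto simp: closed_nbhd_def verts_star_corona adj_star_corona)

lemma closed_nbhd_outer:
  "0 < i \<Longrightarrow> i < n \<Longrightarrow> closed_nbhd (star_corona n) (outer i) = {outer i, inner i}"
  by (auto simp: closed_nbhd_def verts_star_corona adj_star_corona)

lemma closed_nbhd_centre:
  "1 < n \<Longrightarrow> {outer 0, inner 0, inner 1} \<subseteq> closed_nbhd (star_corona n) (outer 0)"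
  by (auto simp: closed_nbhd_def verts_star_corona adj_star_corona)

lemma spoke_coloring_signature_inj:
  assumes "2 \<le> m" "1 < n"
  shows "inj_on (\<lambda>u. (spoke_coloring m u, spoke_coloring m ` closed_nbhd (star_corona n) u))
           (verts (star_corona n))"
proof -
  define \<sigma> where "\<sigma> u = (spoke_coloring m u, spoke_coloring m ` closed_nbhd (star_corona n) u)" for u
  let ?X = "inner_color m" and ?Y = "outer_color m"
  have X_Y: "?X i \<noteq> ?Y i" "?Y i \<noteq> ?X i" "?X i \<noteq> 1" "1 \<noteq> ?X i" for i
    using outer_color_neq_inner_color[of m i] inner_color_neq_1[of m i] by auto
  have \<sigma>_inner: "\<sigma> (inner i) = (?X i, {1, ?X i, ?Y i})" if "i < n" for i
    using that by (simp add: \<sigma>_def closed_nbhd_inner outer_color_0 insert_commute)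
  have \<sigma>_outer: "\<sigma> (outer i) = (?Y i, {?X i, ?Y i})" if "0 < i" "i < n" for i
    using that by (simp add: \<sigma>_def closed_nbhd_outer insert_commute)
  have "?X 1 = 3" using assms(1) by (simp add: inner_color_def)
  then have \<sigma>_centre: "fst (\<sigma> (outer 0)) = 1" "{1, 2, 3} \<subseteq> snd (\<sigma> (outer 0))"
    using image_mono[OF closed_nbhd_centre[OF assms(2)], of "spoke_coloring m"]
    by (simp_all add: \<sigma>_def outer_color_0 inner_color_0)
  have inner_inj: "i = j" if "i < n" "j < n" "\<sigma> (inner i) = \<sigma> (inner j)" for i j
  proof -
    have "?X i = ?X j" "{1, ?X i, ?Y i} = {1, ?X j, ?Y j}"
      using that(3) unfolding \<sigma>_inner[OF that(1)] \<sigma>_inner[OF that(2)] prod.inject by blast+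
    then have "?Y i = ?Y j" using X_Y by (metis insert_iff singletonD)
    with \<open>?X i = ?X j\<close> show ?thesis by (rule inner_outer_color_inj)
  qed
  have outer_inj: "i = j" if "i < n" "j < n" "\<sigma> (outer i) = \<sigma> (outer j)" for i j
  proof (cases "i = 0 \<or> j = 0")
    case True
    have "\<not> {1, 2, 3} \<subseteq> {a, b :: nat}" for a b by auto
    then show ?thesis using True that \<sigma>_centre \<sigma>_outer by (metis neq0_conv snd_conv)
  next
    case False
    then have pos: "0 < i" "0 < j" by simp_all
    have "?Y i = ?Y j" "{?X i, ?Y i} = {?X j, ?Y j}"
      using that(3) unfolding \<sigma>_outer[OF pos(1) that(1)] \<sigma>_outer[OF pos(2) that(2)] prod.inject
      by blast+
    then have "?X i = ?X j" using X_Y by (metis doubleton_eq_iff)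
    then show ?thesis using \<open>?Y i = ?Y j\<close> by (rule inner_outer_color_inj)
  qed
  have inner_neq_outer: "\<sigma> (inner i) \<noteq> \<sigma> (outer j)" if "i < n" "j < n" for i j
  proof (cases "j = 0")
    case True
    then show ?thesis using \<sigma>_inner[OF that(1)] \<sigma>_centre(1) X_Y(3) by (metis fst_conv)
  next
    case False
    then have "0 < j" by simp
    show ?thesis
    proof
      assume "\<sigma> (inner i) = \<sigma> (outer j)"
      then have "?X i = ?Y j" "1 \<in> {?X j, ?Y j}"
        unfolding \<sigma>_inner[OF that(1)] \<sigma>_outer[OF \<open>0 < j\<close> that(2)] by auto
      then show False using X_Y by auto
    qed
  qed
  show ?thesis
  proof (rule inj_onI, fold \<sigma>_def)
    fix u v assume "u \<in> verts (star_corona n)" "v \<in> verts (star_corona n)" "\<sigma> u = \<sigma> v"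
    then show "u = v"
      unfolding verts_star_corona using inner_inj outer_inj inner_neq_outer by fastforce
  qed
qed

lemma is_coloring_spoke_coloring:
  assumes "2 \<le> m" "m \<le> n" "n \<le> m * m"
  shows "is_coloring (star_corona n) (m + 1) (spoke_coloring m)"
  unfolding is_coloring_def
proof (intro conjI ballI impI)
  have "spoke_coloring m x \<in> {1..m + 1}" if x: "x \<in> verts (star_corona n)" for x
  proof -
    obtain i where "i < n" "x = inner i \<or> x = outer i"
      using x by (auto simp: verts_star_corona)
    then show ?thesis
      using assms inner_color_ge_2[of m i] inner_color_le[of m i] outer_color_ge_1[of m i]
        outer_color_le[of i m] by auto
  qed
  moreover have "t \<in> spoke_coloring m ` verts (star_corona n)" if t: "t \<in> {1..m + 1}" for t
  proof -
    consider "t = 1" | "t = 2" | "3 \<le> t" using t by atomize_elim auto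
    then show ?thesis
    proof cases
      case 1
      then have "spoke_coloring m (outer 0) = t" by (simp add: outer_color_0)
      then show ?thesis using assms by (force simp: verts_star_corona)
    next
      case 2
      then have "spoke_coloring m (inner 0) = t" by (simp add: inner_color_0)
      then show ?thesis using assms by (force simp: verts_star_corona)
    next
      case 3
      with t have "t - 2 < m" by simp
      then have "spoke_coloring m (inner (t - 2)) = t" using 3 by (simp add: inner_color_def)
      moreover have "inner (t - 2) \<in> verts (star_corona n)"
        using \<open>t - 2 < m\<close> assms(2) by (simp add: verts_star_corona)
      ultimately show ?thesis by (metis image_eqI)
    qed
  qed
  ultimately show "spoke_coloring m ` verts (star_corona n) = {1..m + 1}" by blast
next
  fix u v assume "adj (star_corona n) u v"
  then show "spoke_coloring m u \<noteq> spoke_coloring m v"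
    using inner_color_neq_1 outer_color_neq_inner_color
    by (auto simp: adj_star_corona outer_color_0) (metis+)
qed

lemma locating_coloring_spoke_coloring:
  assumes "2 \<le> m" "m \<le> n" "n \<le> m * m"
  shows "locating_coloring (star_corona n) (m + 1) (spoke_coloring m)"
  using assms
  by (intro locating_coloringI connected_star_corona is_coloring_spoke_coloring
      spoke_coloring_signature_inj) (auto simp: verts_star_corona)

lemma nat_ceiling_sqrt_square_ge: "n \<le> nat \<lceil>sqrt (real n)\<rceil> * nat \<lceil>sqrt (real n)\<rceil>"
proof -
  define m where "m = nat \<lceil>sqrt (real n)\<rceil>"
  have "sqrt (real n) \<le> real m"
    unfolding m_def using le_of_int_ceiling[of "sqrt (real n)"] by linarith
  then have "real n \<le> real m * real m"
    using real_sqrt_ge_zero[of "real n"] mult_mono[of "sqrt (real n)" "real m" "sqrt (real n)" "real m"]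
    by simp
  then show ?thesis unfolding m_def[symmetric] by (simp flip: of_nat_mult)
qed

lemma nat_ceiling_sqrt_le: "n \<le> k * k \<Longrightarrow> nat \<lceil>sqrt (real n)\<rceil> \<le> k"
  by (simp add: ceiling_le_iff real_le_lsqrt nat_le_iff power2_eq_square flip: of_nat_mult)

theorem theorem8:
  fixes n :: nat
  assumes "n \<ge> 4"
  shows "locating_chromatic_number (corona (star n) compl_K1) = nat \<lceil>sqrt (real n)\<rceil> + 1"
proof -
  define m where "m = nat \<lceil>sqrt (real n)\<rceil>"
  have "n \<le> m * m" and least: "\<And>k. n \<le> k * k \<Longrightarrow> m \<le> k"
    unfolding m_def by (rule nat_ceiling_sqrt_square_ge, rule nat_ceiling_sqrt_le)
  have "m \<le> n" using least[of n] by simp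
  have "2 \<le> m"
  proof (rule ccontr)
    assume "\<not> 2 \<le> m"
    then have "m * m \<le> 1 * 1" by (intro mult_le_mono) auto
    with \<open>n \<le> m * m\<close> assms show False by simp
  qed
  show ?thesis
    unfolding locating_chromatic_number_def m_def[symmetric]
  proof (rule Least_equality)
    show "\<exists>c. locating_coloring (star_corona n) (m + 1) c"
      using locating_coloring_spoke_coloring[OF \<open>2 \<le> m\<close> \<open>m \<le> n\<close> \<open>n \<le> m * m\<close>] by blast
  next
    fix k assume "\<exists>c. locating_coloring (star_corona n) k c"
    then have "n \<le> (k - 1) * (k - 1)" using star_corona_size_le_if_locating assms by auto
    with assms show "m + 1 \<le> k" using least[of "k - 1"] by (cases k) auto
  qed
qed

end
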